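(* Any data structure for $n$-vertex directed graphs that decides, for any query set $F$ of at most $2f$ failing edges with $2f = O(\log n)$, whether the fault-tolerant diameter $\mathrm{diam}(G-F)$ is finite requires $\Omega(2^f n)$ bits of space.
   Context: $G-F$ is $G$ with the edges of $F$ removed and $\mathrm{diam}(H)=\max_{s,t} d_H(s,t)$, the maximum shortest-path distance over ordered vertex pairs; it is finite iff $H$ is strongly connected. *)

theory Defs
  imports Main "HOL-Library.Extended_Nat"
begin

definition digraphs :: "nat \<Rightarrow> (nat \<times> nat) set set" where
  "digraphs n = {E. E \<subseteq> {(u,v). u < n \<and> v < n \<and> u \<noteq> v}}"

definition sp_dist :: "(nat \<times> nat) set \<Rightarrow> nat \<Rightarrow> nat \<Rightarrow> enat" where
  "sp_dist E s t = (INF k \<in> {k. (s,t) \<in> E ^^ k}. enat k)"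

definition diam :: "nat \<Rightarrow> (nat \<times> nat) set \<Rightarrow> enat" where
  "diam n E = (SUP s \<in> {0..<n}. SUP t \<in> {0..<n}. sp_dist E s t)"

end

theory Submission
  imports Defs
begin

(* Cut the vertex set into blocks of 4 * 2^d vertices, block g carrying an out-tree and an in-tree of
   depth d, and join out-leaf l to in-leaf m whenever (g, l, m) lies in a set M. Every vertex points
   to the out-root of its block and every in-root points to every vertex, so the graph is strongly
   connected as soon as each gadget has one intact root-to-root route. Failing the at most 2d edges
   that leave the root-to-l path of the out-tree and the root-to-m path of the in-tree of block g
   leaves the out-root of g a single way into the in-root: the edge from l to m. Hence
   diam (G - F) is finite iff (g, l, m) is in M, so the query answers recover M, an arbitrary
   subset of a set of about 2^d n triples; with d = f this forces Omega(2^f n) bits. *)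

section \<open>Reachability, diameter and encodings\<close>

lemma sp_dist_less_infinity_iff: "sp_dist E s t < \<infinity> \<longleftrightarrow> (s, t) \<in> E\<^sup>*"
proof
  assume "sp_dist E s t < \<infinity>"
  then have "{k. (s, t) \<in> E ^^ k} \<noteq> {}"
    unfolding sp_dist_def by (metis INF_empty image_empty less_irrefl top_enat_def)
  then show "(s, t) \<in> E\<^sup>*" by (auto simp: rtrancl_power)
next
  assume "(s, t) \<in> E\<^sup>*"
  then obtain k where "(s, t) \<in> E ^^ k" by (auto simp: rtrancl_power)
  then have "sp_dist E s t \<le> enat k" unfolding sp_dist_def by (auto intro: INF_lower2)
  then show "sp_dist E s t < \<infinity>" by (meson enat_ord_code(4) le_less_trans)
qed

lemma diam_less_infinity_iff:
  "diam n E < \<infinity> \<longleftrightarrow> (\<forall>u<n. \<forall>v<n. (u, v) \<in> E\<^sup>*)"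
proof (cases "n = 0")
  case False
  then show ?thesis
    unfolding diam_def
    by (simp only: finite_Sup_less_iff finite_imageI finite_atLeastLessThan image_is_empty
        atLeastLessThan_empty_iff ball_simps sp_dist_less_infinity_iff atLeastLessThan_iff) auto
qed (simp add: diam_def bot_enat_def)

lemma card_le_length_if_inj_on_Pow:
  fixes code :: "'a set \<Rightarrow> bool list"
  assumes "finite U" and "inj_on code (Pow U)" and "\<And>S. S \<subseteq> U \<Longrightarrow> length (code S) \<le> s"
  shows "card U \<le> s"
proof -
  let ?Lists = "{xs :: bool list. set xs \<subseteq> UNIV \<and> length xs \<le> s}"
  have "(2::nat) ^ card U = card (code ` Pow U)"
    using assms(1,2) by (simp add: card_image card_Pow)
  also have "\<dots> \<le> card ?Lists"
    using assms(3) by (intro card_mono finite_lists_length_le) auto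
  also have "\<dots> = (\<Sum>i<Suc s. 2 ^ i)"
    using card_lists_length_le[of "UNIV :: bool set" s] by (simp add: lessThan_Suc_atMost)
  also have "\<dots> = 2 ^ Suc s - 1"
    using mask_eq_sum_exp[where 'a = nat, of "Suc s"] by (simp add: lessThan_def)
  also have "\<dots> < 2 ^ Suc s"
    by simp
  finally show ?thesis
    using power_less_imp_less_exp[of "2::nat" "card U" "Suc s"] by simp
qed

section \<open>Complete binary trees\<close>

text \<open>Complete binary trees of depth d in heap numbering: root 1, the children of a are 2a and 2a+1.\<close>

definition tree_node :: "nat \<Rightarrow> nat \<Rightarrow> bool" where
  "tree_node d a \<longleftrightarrow> 1 \<le> a \<and> a < 2 * 2 ^ d"

definition tree_leaf :: "nat \<Rightarrow> nat \<Rightarrow> bool" where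
  "tree_leaf d a \<longleftrightarrow> 2 ^ d \<le> a \<and> a < 2 * 2 ^ d"

definition tree_edge :: "nat \<Rightarrow> nat \<Rightarrow> nat \<Rightarrow> bool" where
  "tree_edge d a b \<longleftrightarrow> tree_node d a \<and> tree_node d b \<and> b div 2 = a"

definition tree_ancestor :: "nat \<Rightarrow> nat \<Rightarrow> bool" where
  "tree_ancestor a l \<longleftrightarrow> 1 \<le> a \<and> (\<exists>k. a = l div 2 ^ k)"

definition tree_exits :: "nat \<Rightarrow> nat \<Rightarrow> (nat \<times> nat) set" where
  "tree_exits d l = {(a, b). tree_edge d a b \<and> tree_ancestor a l \<and> \<not> tree_ancestor b l}"

lemma div2_cases: "(x::nat) = 2 * (x div 2) \<or> x = 2 * (x div 2) + 1"
  by presburger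

lemma tree_edge_bounds: "tree_edge d a b \<Longrightarrow> 1 \<le> a \<and> a < 2 ^ d \<and> 2 \<le> b \<and> b < 2 * 2 ^ d \<and> a < b"
  unfolding tree_edge_def tree_node_def by auto

lemma one_less_two_pow: "1 < 2 * (2::nat) ^ d"
  using one_le_power[of "2::nat" d] by linarith

lemma tree_leaf_node: "tree_leaf d a \<Longrightarrow> tree_node d a"
  unfolding tree_leaf_def tree_node_def using one_le_power[of "2::nat" d] by linarith

lemma tree_leaf_div_depth: "tree_leaf d l \<Longrightarrow> l div 2 ^ d = 1"
  unfolding tree_leaf_def by (intro div_nat_eqI) auto

lemma tree_ancestor_root: "tree_leaf d l \<Longrightarrow> tree_ancestor 1 l"
  unfolding tree_ancestor_def using tree_leaf_div_depth[of d l] by (metis order_refl)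

lemma tree_ancestor_node: "tree_leaf d l \<Longrightarrow> tree_ancestor a l \<Longrightarrow> tree_node d a"
  unfolding tree_ancestor_def tree_leaf_def tree_node_def
  using div_le_dividend le_less_trans by blast

lemma tree_ancestor_leaf_eq:
  assumes "tree_leaf d l" and "tree_leaf d a" and "tree_ancestor a l"
  shows "a = l"
proof -
  obtain k where k: "a = l div 2 ^ k" using assms(3) unfolding tree_ancestor_def by blast
  have "k = 0"
  proof (rule ccontr)
    assume "k \<noteq> 0"
    then have "l div 2 ^ k \<le> l div 2"
      using power_increasing[of 1 k "2::nat"] by (intro div_le_mono2) auto
    also have "\<dots> < 2 ^ d" using assms(1) unfolding tree_leaf_def by auto
    finally show False using assms(2) k unfolding tree_leaf_def by simp
  qed
  then show ?thesis using k by simp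
qed

lemma tree_path_edge:
  assumes l: "tree_leaf d l" and "j < d"
  shows "tree_edge d (l div 2 ^ Suc j) (l div 2 ^ j) \<and> tree_ancestor (l div 2 ^ j) l"
proof -
  have "1 \<le> l div 2 ^ i" if "i \<le> d" for i
  proof -
    have "2 ^ i \<le> l" using l that unfolding tree_leaf_def
      by (meson le_trans one_le_numeral power_increasing)
    then show ?thesis by (simp add: div_greater_zero_iff Suc_le_eq)
  qed
  then have "tree_ancestor (l div 2 ^ i) l" if "i \<le> d" for i
    using that unfolding tree_ancestor_def by blast
  then have "tree_ancestor (l div 2 ^ Suc j) l" "tree_ancestor (l div 2 ^ j) l"
    using \<open>j < d\<close> Suc_leI less_imp_le by blast+
  moreover have "l div 2 ^ Suc j = l div 2 ^ j div 2"
    by (simp only: power_Suc2 div_mult2_eq)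
  ultimately show ?thesis
    using tree_ancestor_node[OF l] unfolding tree_edge_def by simp
qed

lemma rtrancl_tree_path:
  assumes l: "tree_leaf d l"
    and edge: "\<And>a b. tree_edge d a b \<Longrightarrow> tree_ancestor b l \<Longrightarrow> (\<phi> a, \<phi> b) \<in> R"
  shows "(\<phi> 1, \<phi> l) \<in> R\<^sup>*"
proof -
  have "(\<phi> (l div 2 ^ j), \<phi> l) \<in> R\<^sup>*" if "j \<le> d" for j
    using that
  proof (induction j)
    case (Suc j)
    then have "(\<phi> (l div 2 ^ Suc j), \<phi> (l div 2 ^ j)) \<in> R"
      using edge tree_path_edge[OF l] Suc_le_lessD by blast
    moreover have "(\<phi> (l div 2 ^ j), \<phi> l) \<in> R\<^sup>*"
      using Suc by simp
    ultimately show ?case by (rule converse_rtrancl_into_rtrancl)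
  qed simp
  from this[of d] show ?thesis by (simp only: tree_leaf_div_depth[OF l] div_by_1 order_refl)
qed

lemma tree_exits_edge: "(a, b) \<in> tree_exits d l \<Longrightarrow> tree_edge d a b"
  unfolding tree_exits_def by simp

lemma tree_exits_subset:
  assumes l: "tree_leaf d l"
  shows "tree_exits d l \<subseteq>
    (\<lambda>k. (l div 2 ^ Suc k, 4 * (l div 2 ^ Suc k) + 1 - l div 2 ^ k)) ` {..<d}" (is "_ \<subseteq> ?exit ` _")
proof clarify
  fix a b assume "(a, b) \<in> tree_exits d l"
  then have ab: "tree_edge d a b" "tree_ancestor a l" "\<not> tree_ancestor b l"
    unfolding tree_exits_def by auto
  obtain j where j: "a = l div 2 ^ j" using ab(2) unfolding tree_ancestor_def by blast
  have a: "1 \<le> a" "a < 2 ^ d" using tree_edge_bounds[OF ab(1)] by auto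
  have "j \<noteq> 0" using a j l unfolding tree_leaf_def by (intro notI) simp
  then obtain k where k: "j = Suc k"
    using not0_implies_Suc by blast
  have "k < d"
  proof (rule ccontr)
    assume "\<not> k < d"
    then have "2 * 2 ^ d \<le> (2::nat) ^ j" using k by (simp add: power_increasing)
    then show False using a j l unfolding tree_leaf_def by simp
  qed
  define c where "c = l div 2 ^ k"
  have "c div 2 = a" unfolding c_def j k by (simp only: power_Suc2 div_mult2_eq)
  then have "tree_ancestor c l" using a unfolding tree_ancestor_def c_def by auto
  then have "b \<noteq> c" using ab(3) by auto
  moreover have "b div 2 = a" using ab(1) unfolding tree_edge_def by simp
  \<comment> \<open>b and c are the two children 2a and 2a+1 of a\<close>
  ultimately have "b = 4 * a + 1 - c"
    using \<open>c div 2 = a\<close> div2_cases[of b] div2_cases[of c] by linarith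
  then show "(a, b) \<in> ?exit ` {..<d}"
    using \<open>k < d\<close> j k c_def by blast
qed

lemma finite_tree_exits: "tree_leaf d l \<Longrightarrow> finite (tree_exits d l)"
  by (rule finite_subset[OF tree_exits_subset]) simp_all

lemma card_tree_exits_le:
  assumes "tree_leaf d l"
  shows "card (tree_exits d l) \<le> d"
  using card_mono[OF finite_imageI[OF finite_lessThan] tree_exits_subset[OF assms]]
    card_image_le[OF finite_lessThan, of _ d, unfolded card_lessThan]
  by (rule le_trans)

section \<open>The gadget graph\<close>

definition gadgets :: "nat \<Rightarrow> nat \<Rightarrow> nat" where
  "gadgets n d = n div (4 * 2 ^ d)"

text \<open>Vertices beyond the last full block count as part of the
  last gadget.\<close>

definition out_vertex :: "nat \<Rightarrow> nat \<Rightarrow> nat \<Rightarrow> nat" where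
  "out_vertex d g a = g * (4 * 2 ^ d) + a"

definition in_vertex :: "nat \<Rightarrow> nat \<Rightarrow> nat \<Rightarrow> nat" where
  "in_vertex d g a = g * (4 * 2 ^ d) + 2 * 2 ^ d + a"

definition gadget_of :: "nat \<Rightarrow> nat \<Rightarrow> nat \<Rightarrow> nat" where
  "gadget_of n d v = min (v div (4 * 2 ^ d)) (gadgets n d - 1)"

definition gadget_graph :: "nat \<Rightarrow> nat \<Rightarrow> (nat \<times> nat \<times> nat) set \<Rightarrow> (nat \<times> nat) set" where
  "gadget_graph n d M =
       {(out_vertex d g a, out_vertex d g b) | g a b. g < gadgets n d \<and> tree_edge d a b}
     \<union> {(in_vertex d g b, in_vertex d g a) | g a b. g < gadgets n d \<and> tree_edge d a b}
     \<union> {(out_vertex d g l, in_vertex d g m) | g l m.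
          (g, l, m) \<in> M \<and> g < gadgets n d \<and> tree_leaf d l \<and> tree_leaf d m}
     \<union> {(v, out_vertex d (gadget_of n d v) 1) | v. v < n \<and> v \<noteq> out_vertex d (gadget_of n d v) 1}
     \<union> {(in_vertex d g 1, v) | g v. g < gadgets n d \<and> v < n \<and> v \<noteq> in_vertex d g 1}"

definition fault_set :: "nat \<Rightarrow> nat \<Rightarrow> nat \<Rightarrow> nat \<Rightarrow> (nat \<times> nat) set" where
  "fault_set d g l m =
       (\<lambda>(a, b). (out_vertex d g a, out_vertex d g b)) ` tree_exits d l
     \<union> (\<lambda>(a, b). (in_vertex d g b, in_vertex d g a)) ` tree_exits d m"

lemma block_eq_iff:
  fixes B :: nat
  assumes "x < B" and "y < B"
  shows "g * B + x = h * B + y \<longleftrightarrow> g = h \<and> x = y"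
proof
  assume eq: "g * B + x = h * B + y"
  have "(g * B + x) div B = g" "(h * B + y) div B = h" using assms by auto
  with eq show "g = h \<and> x = y" by simp
qed simp

lemma out_vertex_eq_iff [simp]:
  "a < 2 * 2 ^ d \<Longrightarrow> b < 2 * 2 ^ d \<Longrightarrow> out_vertex d g a = out_vertex d h b \<longleftrightarrow> g = h \<and> a = b"
  unfolding out_vertex_def by (rule block_eq_iff) auto

lemma in_vertex_eq_iff [simp]:
  "a < 2 * 2 ^ d \<Longrightarrow> b < 2 * 2 ^ d \<Longrightarrow> in_vertex d g a = in_vertex d h b \<longleftrightarrow> g = h \<and> a = b"
  unfolding in_vertex_def by (subst add.assoc)+ (subst block_eq_iff; auto)

lemma out_vertex_neq_in_vertex [simp]:
  "a < 2 * 2 ^ d \<Longrightarrow> b < 2 * 2 ^ d \<Longrightarrow> out_vertex d g a \<noteq> in_vertex d h b"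
  unfolding out_vertex_def in_vertex_def by (subst add.assoc) (subst block_eq_iff; auto)

lemma in_vertex_neq_out_vertex [simp]:
  "a < 2 * 2 ^ d \<Longrightarrow> b < 2 * 2 ^ d \<Longrightarrow> in_vertex d h b \<noteq> out_vertex d g a"
  using out_vertex_neq_in_vertex by metis

lemma block_less:
  assumes "g < gadgets n d" and "x < 4 * 2 ^ d"
  shows "g * (4 * 2 ^ d) + x < n"
proof -
  have "g * (4 * 2 ^ d) + x < Suc g * (4 * 2 ^ d)" using assms(2) by simp
  also have "\<dots> \<le> gadgets n d * (4 * 2 ^ d)" using assms(1) by (intro mult_right_mono) auto
  also have "\<dots> \<le> n" unfolding gadgets_def by simp
  finally show ?thesis .
qed

lemma out_vertex_less: "g < gadgets n d \<Longrightarrow> a < 2 * 2 ^ d \<Longrightarrow> out_vertex d g a < n"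
  unfolding out_vertex_def by (rule block_less) auto

lemma in_vertex_less: "g < gadgets n d \<Longrightarrow> a < 2 * 2 ^ d \<Longrightarrow> in_vertex d g a < n"
  unfolding in_vertex_def using block_less[of g n d "2 * 2 ^ d + a"] by simp

lemma gadget_of_block: "g < gadgets n d \<Longrightarrow> x < 4 * 2 ^ d \<Longrightarrow> gadget_of n d (g * (4 * 2 ^ d) + x) = g"
  unfolding gadget_of_def by simp

lemma gadget_of_out_vertex [simp]:
  "g < gadgets n d \<Longrightarrow> a < 2 * 2 ^ d \<Longrightarrow> gadget_of n d (out_vertex d g a) = g"
  unfolding out_vertex_def by (rule gadget_of_block) auto

lemma gadget_of_in_vertex [simp]:
  "g < gadgets n d \<Longrightarrow> a < 2 * 2 ^ d \<Longrightarrow> gadget_of n d (in_vertex d g a) = g"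
  unfolding in_vertex_def using gadget_of_block[of g n d "2 * 2 ^ d + a"] by (simp add: add.assoc)

lemma gadget_of_less: "0 < gadgets n d \<Longrightarrow> gadget_of n d v < gadgets n d"
  unfolding gadget_of_def by simp

lemma out_edge_mem_fault_set_iff:
  assumes "a < 2 * 2 ^ d" and "b < 2 * 2 ^ d"
  shows "(out_vertex d h a, out_vertex d h b) \<in> fault_set d g l m \<longleftrightarrow> h = g \<and> (a, b) \<in> tree_exits d l"
  using assms tree_edge_bounds[OF tree_exits_edge] unfolding fault_set_def by fastforce

lemma in_edge_mem_fault_set_iff:
  assumes "a < 2 * 2 ^ d" and "b < 2 * 2 ^ d"
  shows "(in_vertex d h b, in_vertex d h a) \<in> fault_set d g l m \<longleftrightarrow> h = g \<and> (a, b) \<in> tree_exits d m"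
  using assms tree_edge_bounds[OF tree_exits_edge] unfolding fault_set_def by fastforce

lemma out_in_edge_not_mem_fault_set:
  "a < 2 * 2 ^ d \<Longrightarrow> b < 2 * 2 ^ d \<Longrightarrow> (out_vertex d h a, in_vertex d h' b) \<notin> fault_set d g l m"
  using tree_edge_bounds[OF tree_exits_edge] unfolding fault_set_def by fastforce

lemma fault_set_not_into_out_root: "(v, out_vertex d h 1) \<notin> fault_set d g l m"
  using tree_edge_bounds[OF tree_exits_edge] one_less_two_pow[of d]
  unfolding fault_set_def by fastforce

lemma fault_set_not_from_in_root: "(in_vertex d h 1, v) \<notin> fault_set d g l m"
  using tree_edge_bounds[OF tree_exits_edge] one_less_two_pow[of d]
  unfolding fault_set_def by fastforce

lemma fault_set_subset_gadget_graph:
  assumes "g < gadgets n d"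
  shows "fault_set d g l m \<subseteq> gadget_graph n d M"
proof
  fix e assume "e \<in> fault_set d g l m"
  then obtain a b where "tree_edge d a b"
    and "e = (out_vertex d g a, out_vertex d g b) \<or> e = (in_vertex d g b, in_vertex d g a)"
    unfolding fault_set_def tree_exits_def by auto
  then show "e \<in> gadget_graph n d M" using assms unfolding gadget_graph_def by blast
qed

lemma rtrancl_to_out_root:
  "v < n \<Longrightarrow> (v, out_vertex d (gadget_of n d v) 1) \<in> (gadget_graph n d M - fault_set d g l m)\<^sup>*"
  using fault_set_not_into_out_root unfolding gadget_graph_def
  by (cases "v = out_vertex d (gadget_of n d v) 1") (simp, blast)

lemma rtrancl_from_in_root:
  "h < gadgets n d \<Longrightarrow> v < n \<Longrightarrow> (in_vertex d h 1, v) \<in> (gadget_graph n d M - fault_set d g l m)\<^sup>*"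
  using fault_set_not_from_in_root unfolding gadget_graph_def
  by (cases "v = in_vertex d h 1") (simp, blast)

lemma card_fault_set_le:
  assumes "tree_leaf d l" and "tree_leaf d m"
  shows "card (fault_set d g l m) \<le> 2 * d"
proof -
  have "card (fault_set d g l m) \<le> card (tree_exits d l) + card (tree_exits d m)"
    unfolding fault_set_def by (intro card_Un_le[THEN order_trans] add_mono card_image_le)
      (simp_all add: finite_tree_exits assms)
  then show ?thesis using card_tree_exits_le[OF assms(1)] card_tree_exits_le[OF assms(2)] by simp
qed

lemma gadget_graph_in_digraphs:
  assumes K: "0 < gadgets n d"
  shows "gadget_graph n d M \<in> digraphs n"
proof -
  have root: "(1::nat) < 2 * 2 ^ d" by (rule one_less_two_pow)
  have "u < n \<and> v < n \<and> u \<noteq> v" if "(u, v) \<in> gadget_graph n d M" for u v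
    using that unfolding gadget_graph_def
  proof (elim UnE CollectE exE conjE)
    fix g a b assume "(u, v) = (out_vertex d g a, out_vertex d g b)" "g < gadgets n d" "tree_edge d a b"
    then show ?thesis using tree_edge_bounds[of d a b] out_vertex_less[of g n d] by auto
  next
    fix g a b assume "(u, v) = (in_vertex d g b, in_vertex d g a)" "g < gadgets n d" "tree_edge d a b"
    then show ?thesis using tree_edge_bounds[of d a b] in_vertex_less[of g n d] by auto
  next
    fix g l m assume "(u, v) = (out_vertex d g l, in_vertex d g m)" "g < gadgets n d"
      "tree_leaf d l" "tree_leaf d m"
    then show ?thesis using out_vertex_less[of g n d] in_vertex_less[of g n d]
      unfolding tree_leaf_def by auto
  next
    fix w assume "(u, v) = (w, out_vertex d (gadget_of n d w) 1)" "w < n"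
      "w \<noteq> out_vertex d (gadget_of n d w) 1"
    then show ?thesis using out_vertex_less[OF gadget_of_less[OF K] root] by auto
  next
    fix g w assume "(u, v) = (in_vertex d g 1, w)" "g < gadgets n d" "w < n" "w \<noteq> in_vertex d g 1"
    then show ?thesis using in_vertex_less[OF _ root] by auto
  qed
  then show ?thesis unfolding digraphs_def by auto
qed

lemma out_vertex_successor:
  assumes g: "g < gadgets n d" and a: "tree_node d a"
    and e: "(out_vertex d g a, w) \<in> gadget_graph n d M"
  shows "w = out_vertex d g 1 \<or> (\<exists>b. tree_edge d a b \<and> w = out_vertex d g b)
    \<or> (\<exists>m. (g, a, m) \<in> M \<and> tree_leaf d a \<and> tree_leaf d m \<and> w = in_vertex d g m)"
proof -
  have a2: "a < 2 * 2 ^ d" using a unfolding tree_node_def by simp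
  have root: "(1::nat) < 2 * 2 ^ d" by (rule one_less_two_pow)
  from e show ?thesis
    unfolding gadget_graph_def
  proof (elim UnE CollectE exE conjE)
    fix h a' b assume "(out_vertex d g a, w) = (out_vertex d h a', out_vertex d h b)"
      "h < gadgets n d" "tree_edge d a' b"
    then show ?thesis using a2 tree_edge_bounds[of d a' b] by auto
  next
    fix h a' b assume "(out_vertex d g a, w) = (in_vertex d h b, in_vertex d h a')" "tree_edge d a' b"
    then show ?thesis using a2 tree_edge_bounds[of d a' b] by auto
  next
    fix h l m assume "(out_vertex d g a, w) = (out_vertex d h l, in_vertex d h m)"
      "(h, l, m) \<in> M" "tree_leaf d l" "tree_leaf d m"
    then show ?thesis using a2 unfolding tree_leaf_def by auto
  next
    fix v assume "(out_vertex d g a, w) = (v, out_vertex d (gadget_of n d v) 1)"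
    then show ?thesis using g a2 by auto
  next
    fix h v assume "(out_vertex d g a, w) = (in_vertex d h 1, v)"
    then show ?thesis using a2 root by simp
  qed
qed

lemma in_vertex_successor:
  assumes g: "g < gadgets n d" and b: "tree_node d b"
    and e: "(in_vertex d g b, w) \<in> gadget_graph n d M"
  shows "w = out_vertex d g 1 \<or> (\<exists>a. tree_edge d a b \<and> w = in_vertex d g a) \<or> b = 1"
proof -
  have b2: "b < 2 * 2 ^ d" using b unfolding tree_node_def by simp
  have root: "(1::nat) < 2 * 2 ^ d" by (rule one_less_two_pow)
  from e show ?thesis
    unfolding gadget_graph_def
  proof (elim UnE CollectE exE conjE)
    fix h a b' assume "(in_vertex d g b, w) = (out_vertex d h a, out_vertex d h b')" "tree_edge d a b'"
    then show ?thesis using b2 tree_edge_bounds[of d a b'] by auto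
  next
    fix h a b' assume "(in_vertex d g b, w) = (in_vertex d h b', in_vertex d h a)"
      "h < gadgets n d" "tree_edge d a b'"
    then show ?thesis using b2 tree_edge_bounds[of d a b'] by auto
  next
    fix h l m assume "(in_vertex d g b, w) = (out_vertex d h l, in_vertex d h m)" "tree_leaf d l"
    then show ?thesis using b2 unfolding tree_leaf_def by auto
  next
    fix v assume "(in_vertex d g b, w) = (v, out_vertex d (gadget_of n d v) 1)"
    then show ?thesis using g b2 by auto
  next
    fix h v assume "(in_vertex d g b, w) = (in_vertex d h 1, v)"
    then show ?thesis using b2 root by simp
  qed
qed

lemma gadget_out_root_reaches_in_root:
  assumes h: "h < gadgets n d" and M: "(h, l', m') \<in> M"
    and l': "tree_leaf d l'" and m': "tree_leaf d m'"
    and same: "h = g \<Longrightarrow> l' = l \<and> m' = m"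
  shows "(out_vertex d h 1, in_vertex d h 1) \<in> (gadget_graph n d M - fault_set d g l m)\<^sup>*"
proof -
  let ?R = "gadget_graph n d M - fault_set d g l m"
  have "(out_vertex d h 1, out_vertex d h l') \<in> ?R\<^sup>*"
  proof (rule rtrancl_tree_path[OF l'])
    fix a b assume ab: "tree_edge d a b" "tree_ancestor b l'"
    then have "(a, b) \<notin> tree_exits d l" if "h = g" using same that unfolding tree_exits_def by blast
    then show "(out_vertex d h a, out_vertex d h b) \<in> ?R"
      using h ab tree_edge_bounds[OF ab(1)]
      by (auto simp: out_edge_mem_fault_set_iff gadget_graph_def)
  qed
  moreover have "(out_vertex d h l', in_vertex d h m') \<in> ?R"
    using h M l' m' out_in_edge_not_mem_fault_set unfolding gadget_graph_def tree_leaf_def by blast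
  moreover have "(in_vertex d h 1, in_vertex d h m') \<in> (?R\<inverse>)\<^sup>*"
  proof (rule rtrancl_tree_path[OF m'])
    fix a b assume ab: "tree_edge d a b" "tree_ancestor b m'"
    then have "(a, b) \<notin> tree_exits d m" if "h = g" using same that unfolding tree_exits_def by blast
    then show "(in_vertex d h a, in_vertex d h b) \<in> ?R\<inverse>"
      using h ab tree_edge_bounds[OF ab(1)]
      by (auto simp: in_edge_mem_fault_set_iff gadget_graph_def)
  qed
  ultimately show ?thesis
    by (meson rtrancl_converseD rtrancl_into_rtrancl rtrancl_trans)
qed

lemma gadget_graph_minus_fault_set_reachable:
  assumes g: "g < gadgets n d" and M: "(g, l, m) \<in> M"
    and l: "tree_leaf d l" and m: "tree_leaf d m"
    and crossings: "\<forall>h < gadgets n d. \<exists>l' m'. (h, l', m') \<in> M \<and> tree_leaf d l' \<and> tree_leaf d m'"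
    and u: "u < n" and v: "v < n"
  shows "(u, v) \<in> (gadget_graph n d M - fault_set d g l m)\<^sup>*"
proof -
  let ?R = "gadget_graph n d M - fault_set d g l m"
  define h where "h = gadget_of n d u"
  have h: "h < gadgets n d" using gadget_of_less g unfolding h_def by simp
  have "(u, out_vertex d h 1) \<in> ?R\<^sup>*"
    unfolding h_def by (rule rtrancl_to_out_root[OF u])
  moreover have "(out_vertex d h 1, in_vertex d h 1) \<in> ?R\<^sup>*"
  proof (cases "h = g")
    case True
    then show ?thesis using gadget_out_root_reaches_in_root[OF h _ l m, of M g] M by blast
  next
    case False
    obtain l' m' where "(h, l', m') \<in> M" "tree_leaf d l'" "tree_leaf d m'"
      using crossings h by blast
    with False show ?thesis using gadget_out_root_reaches_in_root[OF h] by blast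
  qed
  moreover have "(in_vertex d h 1, v) \<in> ?R\<^sup>*"
    by (rule rtrancl_from_in_root[OF h v])
  ultimately show ?thesis by (meson rtrancl_trans)
qed

definition fault_cut :: "nat \<Rightarrow> nat \<Rightarrow> nat \<Rightarrow> nat \<Rightarrow> nat set" where
  "fault_cut d g l m = out_vertex d g ` {a. tree_ancestor a l}
     \<union> in_vertex d g ` {b. tree_node d b \<and> \<not> tree_ancestor b m}"

lemma out_tree_successor_mem_fault_cut:
  assumes g: "g < gadgets n d" and M: "(g, l, m) \<notin> M"
    and l: "tree_leaf d l" and m: "tree_leaf d m" and a: "tree_ancestor a l"
    and e: "(out_vertex d g a, w) \<in> gadget_graph n d M - fault_set d g l m"
  shows "w \<in> fault_cut d g l m"
proof -
  from out_vertex_successor[OF g tree_ancestor_node[OF l a]] e consider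
      "w = out_vertex d g 1"
    | b where "tree_edge d a b" "w = out_vertex d g b"
    | m' where "(g, a, m') \<in> M" "tree_leaf d a" "tree_leaf d m'" "w = in_vertex d g m'"
    by blast
  then show ?thesis
  proof cases
    case 1
    then show ?thesis unfolding fault_cut_def using tree_ancestor_root[OF l] by blast
  next
    case (2 b)
    then have "tree_ancestor b l"
      using e a tree_edge_bounds[of d a b]
      by (auto simp: out_edge_mem_fault_set_iff tree_exits_def)
    then show ?thesis using 2 unfolding fault_cut_def by blast
  next
    case (3 m')
    then have "a = l" using tree_ancestor_leaf_eq[OF l _ a] by blast
    then have "\<not> tree_ancestor m' m" using M 3 tree_ancestor_leaf_eq[OF m] by blast
    then show ?thesis using 3 tree_leaf_node unfolding fault_cut_def by blast
  qed
qed

lemma in_tree_successor_mem_fault_cut: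
  assumes g: "g < gadgets n d" and l: "tree_leaf d l" and m: "tree_leaf d m"
    and b: "tree_node d b" "\<not> tree_ancestor b m"
    and e: "(in_vertex d g b, w) \<in> gadget_graph n d M - fault_set d g l m"
  shows "w \<in> fault_cut d g l m"
proof -
  from in_vertex_successor[OF g b(1)] e consider
      "w = out_vertex d g 1"
    | a where "tree_edge d a b" "w = in_vertex d g a"
    | "b = 1"
    by blast
  then show ?thesis
  proof cases
    case 1
    then show ?thesis unfolding fault_cut_def using tree_ancestor_root[OF l] by blast
  next
    case (2 a)
    then have "\<not> tree_ancestor a m"
      using e b tree_edge_bounds[of d a b]
      by (auto simp: in_edge_mem_fault_set_iff tree_exits_def)
    then show ?thesis using 2 unfolding fault_cut_def tree_edge_def by blast
  next
    case 3
    then show ?thesis using b(2) tree_ancestor_root[OF m] by simp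
  qed
qed

lemma Image_fault_cut_subset:
  assumes "g < gadgets n d" and "(g, l, m) \<notin> M" and "tree_leaf d l" and "tree_leaf d m"
  shows "(gadget_graph n d M - fault_set d g l m) `` fault_cut d g l m \<subseteq> fault_cut d g l m"
  using out_tree_successor_mem_fault_cut[OF assms] in_tree_successor_mem_fault_cut[OF assms(1,3,4)]
  unfolding fault_cut_def[of d g l m] by blast

lemma gadget_graph_minus_fault_set_not_reachable:
  assumes g: "g < gadgets n d" and M: "(g, l, m) \<notin> M"
    and l: "tree_leaf d l" and m: "tree_leaf d m"
  shows "(out_vertex d g 1, in_vertex d g 1) \<notin> (gadget_graph n d M - fault_set d g l m)\<^sup>*"
proof
  assume "(out_vertex d g 1, in_vertex d g 1) \<in> (gadget_graph n d M - fault_set d g l m)\<^sup>*"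
  moreover have "out_vertex d g 1 \<in> fault_cut d g l m"
    unfolding fault_cut_def using tree_ancestor_root[OF l] by blast
  ultimately have "in_vertex d g 1 \<in> fault_cut d g l m"
    using Image_closed_trancl[OF Image_fault_cut_subset[OF assms]] by blast
  then show False
    using tree_ancestor_root[OF m] tree_ancestor_node[OF l] one_less_two_pow[of d]
    unfolding fault_cut_def tree_node_def by auto
qed

lemma diam_gadget_graph_minus_fault_set_less_infinity_iff:
  assumes g: "g < gadgets n d" and l: "tree_leaf d l" and m: "tree_leaf d m"
    and crossings: "\<forall>h < gadgets n d. \<exists>l' m'. (h, l', m') \<in> M \<and> tree_leaf d l' \<and> tree_leaf d m'"
  shows "diam n (gadget_graph n d M - fault_set d g l m) < \<infinity> \<longleftrightarrow> (g, l, m) \<in> M"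
proof
  assume "diam n (gadget_graph n d M - fault_set d g l m) < \<infinity>"
  then have "(out_vertex d g 1, in_vertex d g 1) \<in> (gadget_graph n d M - fault_set d g l m)\<^sup>*"
    using out_vertex_less[OF g one_less_two_pow] in_vertex_less[OF g one_less_two_pow]
    unfolding diam_less_infinity_iff by blast
  then show "(g, l, m) \<in> M"
    using gadget_graph_minus_fault_set_not_reachable[OF g _ l m] by blast
next
  assume "(g, l, m) \<in> M"
  then show "diam n (gadget_graph n d M - fault_set d g l m) < \<infinity>"
    using gadget_graph_minus_fault_set_reachable[OF g _ l m crossings]
    unfolding diam_less_infinity_iff by blast
qed

section \<open>The space lower bound\<close>

definition gadget_triples :: "nat \<Rightarrow> nat \<Rightarrow> (nat \<times> nat \<times> nat) set" where
  "gadget_triples n d = {..<gadgets n d} \<times> {2 ^ d..<2 * 2 ^ d} \<times> {Suc (2 ^ d)..<2 * 2 ^ d}"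

lemma two_pow_mult_le_card_gadget_triples:
  assumes d: "1 \<le> d" and n: "4 * 2 ^ d \<le> n"
  shows "2 ^ d * n \<le> 16 * card (gadget_triples n d)"
proof -
  define P :: nat where "P = 2 ^ d"
  define K where "K = gadgets n d"
  have P2: "2 \<le> P" unfolding P_def using power_increasing[of 1 d "2::nat"] d by simp
  have K: "0 < K" using n unfolding K_def gadgets_def by (simp add: div_greater_zero_iff)
  have "n = K * (4 * P) + n mod (4 * P)"
    unfolding K_def gadgets_def P_def by (rule div_mult_mod_eq[symmetric])
  moreover have "n mod (4 * P) < 4 * P" unfolding P_def by simp
  ultimately have "n < K * (4 * P) + 4 * P" by linarith
  also have "\<dots> \<le> 8 * P * K" using K by (simp add: algebra_simps)
  finally have "P * n \<le> 8 * P * (P * K)" by simp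
  also have "\<dots> \<le> 16 * (P - 1) * (P * K)"
    using P2 by (intro mult_right_mono) auto
  also have "\<dots> = 16 * card (gadget_triples n d)"
    unfolding gadget_triples_def K_def P_def by (simp add: card_cartesian_product)
  finally show ?thesis unfolding P_def .
qed

theorem fault_diameter_oracle_size_lower_bound:
  fixes enc :: "(nat \<times> nat) set \<Rightarrow> bool list"
    and query :: "bool list \<Rightarrow> (nat \<times> nat) set \<Rightarrow> bool"
  assumes d: "1 \<le> d" and n: "4 * 2 ^ d \<le> n"
    and size: "\<forall>E \<in> digraphs n. length (enc E) \<le> s"
    and correct: "\<forall>E \<in> digraphs n. \<forall>F. F \<subseteq> E \<and> card F \<le> 2 * d \<longrightarrow>
      query (enc E) F = (diam n (E - F) < \<infinity>)"
  shows "2 ^ d * n \<le> 16 * s"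
proof -
  let ?T = "gadget_triples n d"
  \<comment> \<open>the triples (h, 2^d, 2^d) give every gadget a crossing and lie outside the encoded set\<close>
  define M where "M S = S \<union> {..<gadgets n d} \<times> {2 ^ d :: nat} \<times> {2 ^ d :: nat}" for S
  define code where "code S = enc (gadget_graph n d (M S))" for S
  have "0 < gadgets n d" using n unfolding gadgets_def by (simp add: div_greater_zero_iff)
  then have graph: "gadget_graph n d (M S) \<in> digraphs n" for S
    by (rule gadget_graph_in_digraphs)
  have decides: "query (code S) (fault_set d g l m) \<longleftrightarrow> (g, l, m) \<in> S"
    if "(g, l, m) \<in> ?T" for S g l m
  proof -
    have g: "g < gadgets n d" and l: "tree_leaf d l" and m: "tree_leaf d m" and "m \<noteq> 2 ^ d"
      using that unfolding gadget_triples_def tree_leaf_def by auto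
    have "tree_leaf d (2 ^ d)" unfolding tree_leaf_def by simp
    then have crossings:
        "\<forall>h < gadgets n d. \<exists>l' m'. (h, l', m') \<in> M S \<and> tree_leaf d l' \<and> tree_leaf d m'"
      unfolding M_def by blast
    have "query (code S) (fault_set d g l m)
        \<longleftrightarrow> diam n (gadget_graph n d (M S) - fault_set d g l m) < \<infinity>"
      unfolding code_def
      by (rule correct[rule_format, OF graph conjI[OF fault_set_subset_gadget_graph[OF g]
            card_fault_set_le[OF l m]]])
    also have "\<dots> \<longleftrightarrow> (g, l, m) \<in> M S"
      by (rule diam_gadget_graph_minus_fault_set_less_infinity_iff[OF g l m crossings])
    also have "\<dots> \<longleftrightarrow> (g, l, m) \<in> S"
      using \<open>m \<noteq> 2 ^ d\<close> unfolding M_def by blast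
    finally show ?thesis .
  qed
  have "inj_on code (Pow ?T)"
  proof (rule inj_onI)
    fix S S' assume "S \<in> Pow ?T" "S' \<in> Pow ?T" and eq: "code S = code S'"
    moreover have "x \<in> S \<longleftrightarrow> x \<in> S'" if "x \<in> ?T" for x
      using that decides[of _ _ _ S] decides[of _ _ _ S'] eq by (cases x) simp
    ultimately show "S = S'" by blast
  qed
  moreover have "finite ?T" unfolding gadget_triples_def by simp
  moreover have "length (code S) \<le> s" for S using size graph unfolding code_def by blast
  ultimately have "card ?T \<le> s" by (intro card_le_length_if_inj_on_Pow)
  then show ?thesis using two_pow_mult_le_card_gadget_triples[OF d n] by linarith
qed

lemma four_pow_le_if_double_le_log:
  assumes f: "1 \<le> f" and n: "8 \<le> n" and log: "real (2 * f) \<le> log 2 (real n)"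
  shows "4 * 2 ^ f \<le> n"
proof -
  have "2 powr real (2 * f) \<le> real n"
    using log n le_log_iff[of 2 "real n" "real (2 * f)"] by simp
  then have "real (2 ^ (2 * f)) \<le> real n"
    by (subst (asm) powr_realpow) auto
  then have pow: "2 ^ f * 2 ^ f \<le> n"
    by (simp only: of_nat_le_iff mult_2 power_add)
  show ?thesis
  proof (cases "f = 1")
    case False
    then have "4 \<le> (2::nat) ^ f" using f power_increasing[of 2 f "2::nat"] by simp
    then show ?thesis using pow by (meson le_trans mult_right_mono zero_le)
  qed (use n in simp)
qed

theorem lemma10:
  "\<exists>c::real. c > 0 \<and> (\<exists>\<epsilon>::real. \<epsilon> > 0 \<and> (\<exists>n0::nat. \<forall>n \<ge> n0. \<forall>f::nat.
     1 \<le> f \<and> real (2 * f) \<le> \<epsilon> * log 2 (real n) \<longrightarrow>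
     (\<forall>(s::nat) (enc :: (nat \<times> nat) set \<Rightarrow> bool list)
        (query :: bool list \<Rightarrow> (nat \<times> nat) set \<Rightarrow> bool).
        (\<forall>E \<in> digraphs n. length (enc E) \<le> s) \<and>
        (\<forall>E \<in> digraphs n. \<forall>F. F \<subseteq> E \<and> card F \<le> 2 * f \<longrightarrow>
            query (enc E) F = (diam n (E - F) < \<infinity>))
        \<longrightarrow> real s \<ge> c * 2 ^ f * real n)))"
proof -
  have bound: "real s \<ge> 1/16 * 2 ^ f * real n"
    if "8 \<le> n" "1 \<le> f" "real (2 * f) \<le> log 2 (real n)"
      and "\<forall>E \<in> digraphs n. length (enc E) \<le> s"
      and "\<forall>E \<in> digraphs n. \<forall>F. F \<subseteq> E \<and> card F \<le> 2 * f \<longrightarrow>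
        query (enc E) F = (diam n (E - F) < \<infinity>)"
    for n f s :: nat and enc :: "(nat \<times> nat) set \<Rightarrow> bool list"
      and query :: "bool list \<Rightarrow> (nat \<times> nat) set \<Rightarrow> bool"
  proof -
    have "2 ^ f * n \<le> 16 * s"
      using that by (intro fault_diameter_oracle_size_lower_bound four_pow_le_if_double_le_log)
    then have "real (2 ^ f * n) \<le> real (16 * s)"
      by (simp only: of_nat_le_iff)
    then show ?thesis by simp
  qed
  show ?thesis
    by (rule exI[of _ "1/16"], rule conjI, simp, rule exI[of _ 1], rule conjI, simp,
        rule exI[of _ 8], intro allI impI, elim conjE, rule bound, simp_all)
qed

end
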